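(* Let $\mathcal{M}=(S,A,\delta)$ be a finite fuzzy transition system with rational membership degrees and let $\gamma\in(0,1)$ be rational. Then $d^\gamma_f$ is a rational vector (indexed by $S\times S$) whose bit size is bounded by a polynomial in $\|\mathcal{M}\|$ and $\|\gamma\|$.
   Context: A fuzzy set on a finite set $X$ is a map $\mu:X\to[0,1]$; $\mathcal{F}(X)$ is the set of fuzzy sets on $X$; $\mu(U)=\max_{x\in U}\mu(x)$; $\mathsf{Supp}(\mu)=\{x\mid \mu(x)>0\}$. A fuzzy transition system is $\mathcal{M}=(S,A,\delta)$ with $S,A$ finite and $\delta:S\times A\to\mathcal{P}(\mathcal{F}(S))$, each $\delta(s,a)$ finite. $\|\mathcal{M}\|=|S|+\sum_{s,a,\mu\in\delta(s,a)}\|\mathsf{Supp}(\mu)\|$, where for a finite set of rationals its size is the total number of bits to encode its elements in binary as fractions; $\|\gamma\|$ is the bit size of $\gamma$. $\mathcal{D}(S)$ is the set of pseudo-ultrametrics $d:S\times S\to[0,1]$, ordered pointwise. Lifting: $\hat d(\mu,\eta)=1$ if $\mu(S)\ne\eta(S)$, and otherwise $\hat d(\mu,\eta)$ is the minimum of $\max_{u,v}\min(d(u,v),x_{uv})$ over $x_{uv}\ge0$ with $\max_v x_{uv}=\mu(u)$ for all $u$ and $\max_u x_{uv}=\eta(v)$ for all $v$. For finite $Z\subseteq\mathcal{F}(S)$: $\hat d(\mu,Z)=\min_{\eta\in Z}\hat d(\mu,\eta)$ if $Z\ne\emptyset$, else $1$. Hausdorff distance: $H_{\hat d}(\emptyset,\emptyset)=0$,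 otherwise $H_{\hat d}(Y,Z)=\max(\max_{\mu\in Y}\hat d(\mu,Z),\max_{\eta\in Z}\hat d(\eta,Y))$. $\Delta(d)(s,t)=\gamma\cdot\max_{a\in A}H_{\hat d}(\delta(s,a),\delta(t,a))$ is monotone on $\mathcal{D}(S)$, and $d^\gamma_f$ is its least fixpoint. *)

theory Defs
  imports "HOL-Analysis.Analysis"
begin

fun nat_bits :: "nat \<Rightarrow> nat" where
  "nat_bits n = (if n \<le> 1 then 1 else 1 + nat_bits (n div 2))"

definition rat_bits :: "rat \<Rightarrow> nat" where
  "rat_bits q = (case quotient_of q of (a, b) \<Rightarrow> 1 + nat_bits (nat \<bar>a\<bar>) + nat_bits (nat b))"

definition real_bits :: "real \<Rightarrow> nat" where
  "real_bits r = rat_bits (THE q. of_rat q = r)"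

definition fuzzy_set :: "nat set \<Rightarrow> (nat \<Rightarrow> real) \<Rightarrow> bool" where
  "fuzzy_set S \<mu> \<longleftrightarrow> (\<forall>x\<in>S. 0 \<le> \<mu> x \<and> \<mu> x \<le> 1) \<and> (\<forall>x. x \<notin> S \<longrightarrow> \<mu> x = 0)"

definition fmax :: "(nat \<Rightarrow> real) \<Rightarrow> nat set \<Rightarrow> real" where
  "fmax \<mu> U = Max (\<mu> ` U)"

definition supp :: "nat set \<Rightarrow> (nat \<Rightarrow> real) \<Rightarrow> nat set" where
  "supp S \<mu> = {x \<in> S. \<mu> x > 0}"

definition fts :: "nat set \<Rightarrow> 'a set \<Rightarrow> (nat \<Rightarrow> 'a \<Rightarrow> (nat \<Rightarrow> real) set) \<Rightarrow> bool" where
  "fts S A \<delta> \<longleftrightarrow> finite S \<and> finite A \<and>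
     (\<forall>s\<in>S. \<forall>a\<in>A. finite (\<delta> s a) \<and> (\<forall>\<mu>\<in>\<delta> s a. fuzzy_set S \<mu>))"

definition rational_fts :: "nat set \<Rightarrow> 'a set \<Rightarrow> (nat \<Rightarrow> 'a \<Rightarrow> (nat \<Rightarrow> real) set) \<Rightarrow> bool" where
  "rational_fts S A \<delta> \<longleftrightarrow> (\<forall>s\<in>S. \<forall>a\<in>A. \<forall>\<mu>\<in>\<delta> s a. \<forall>x\<in>S. \<mu> x \<in> \<rat>)"

definition fts_size :: "nat set \<Rightarrow> 'a set \<Rightarrow> (nat \<Rightarrow> 'a \<Rightarrow> (nat \<Rightarrow> real) set) \<Rightarrow> nat" where
  "fts_size S A \<delta> = card S +
     (\<Sum>s\<in>S. \<Sum>a\<in>A. \<Sum>\<mu>\<in>\<delta> s a. \<Sum>x\<in>supp S \<mu>. real_bits (\<mu> x))"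

definition pseudo_ultrametric :: "nat set \<Rightarrow> (nat \<Rightarrow> nat \<Rightarrow> real) \<Rightarrow> bool" where
  "pseudo_ultrametric S d \<longleftrightarrow>
     (\<forall>x\<in>S. \<forall>y\<in>S. 0 \<le> d x y \<and> d x y \<le> 1) \<and>
     (\<forall>x\<in>S. d x x = 0) \<and>
     (\<forall>x\<in>S. \<forall>y\<in>S. d x y = d y x) \<and>
     (\<forall>x\<in>S. \<forall>y\<in>S. \<forall>z\<in>S. d x z \<le> max (d x y) (d y z)) \<and>
     (\<forall>x y. x \<notin> S \<or> y \<notin> S \<longrightarrow> d x y = 0)"

text \<open>Lifting of d to fuzzy sets (the minimum over couplings; it is attained, so
  it coincides with the infimum).\<close>
definition lift :: "nat set \<Rightarrow> (nat \<Rightarrow> nat \<Rightarrow> real) \<Rightarrow> (nat \<Rightarrow> real) \<Rightarrow> (nat \<Rightarrow> real) \<Rightarrow> real" where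
  "lift S d \<mu> \<eta> =
    (if fmax \<mu> S \<noteq> fmax \<eta> S then 1
     else Inf { Max { min (d u v) (x u v) | u v. u \<in> S \<and> v \<in> S } | x.
                (\<forall>u\<in>S. \<forall>v\<in>S. 0 \<le> x u v) \<and>
                (\<forall>u\<in>S. Max ((\<lambda>v. x u v) ` S) = \<mu> u) \<and>
                (\<forall>v\<in>S. Max ((\<lambda>u. x u v) ` S) = \<eta> v) })"

definition lift_set :: "nat set \<Rightarrow> (nat \<Rightarrow> nat \<Rightarrow> real) \<Rightarrow> (nat \<Rightarrow> real) \<Rightarrow> (nat \<Rightarrow> real) set \<Rightarrow> real" where
  "lift_set S d \<mu> Z = (if Z = {} then 1 else Min ((\<lambda>\<eta>. lift S d \<mu> \<eta>) ` Z))"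

text \<open>Hausdorff distance; a maximum over an empty family is read as 0
  (all quantities are nonnegative).\<close>
definition hausdorff :: "nat set \<Rightarrow> (nat \<Rightarrow> nat \<Rightarrow> real) \<Rightarrow> (nat \<Rightarrow> real) set \<Rightarrow> (nat \<Rightarrow> real) set \<Rightarrow> real" where
  "hausdorff S d Y Z =
    (if Y = {} \<and> Z = {} then 0
     else max (Max (insert 0 ((\<lambda>\<mu>. lift_set S d \<mu> Z) ` Y)))
              (Max (insert 0 ((\<lambda>\<eta>. lift_set S d \<eta> Y) ` Z))))"

definition Delta :: "nat set \<Rightarrow> 'a set \<Rightarrow> (nat \<Rightarrow> 'a \<Rightarrow> (nat \<Rightarrow> real) set) \<Rightarrow> real
                      \<Rightarrow> (nat \<Rightarrow> nat \<Rightarrow> real) \<Rightarrow> (nat \<Rightarrow> nat \<Rightarrow> real)" where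
  "Delta S A \<delta> \<gamma> d = (\<lambda>s t. if s \<in> S \<and> t \<in> S
       then \<gamma> * Max (insert 0 ((\<lambda>a. hausdorff S d (\<delta> s a) (\<delta> t a)) ` A))
       else 0)"

definition fuzzy_dist :: "nat set \<Rightarrow> 'a set \<Rightarrow> (nat \<Rightarrow> 'a \<Rightarrow> (nat \<Rightarrow> real) set) \<Rightarrow> real
                          \<Rightarrow> (nat \<Rightarrow> nat \<Rightarrow> real)" where
  "fuzzy_dist S A \<delta> \<gamma> = (THE d. pseudo_ultrametric S d \<and> Delta S A \<delta> \<gamma> d = d \<and>
       (\<forall>d'. pseudo_ultrametric S d' \<and> Delta S A \<delta> \<gamma> d' = d' \<longrightarrow>
              (\<forall>x\<in>S. \<forall>y\<in>S. d x y \<le> d' x y)))"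

end

theory Submission
  imports Defs
begin

text \<open>An optimal coupling for the lifting can be rounded so that its cost is \<open>0\<close>, a membership
  degree, or a value of \<open>d\<close>; hence every value of \<open>\<Delta>(d)\<close> is \<open>\<gamma>\<close> times a degree, \<open>0\<close>, \<open>1\<close> or a
  value of \<open>d\<close>. The least fixpoint exists (Knaster--Tarski) and is the only one, as \<open>\<Delta>\<close> is a
  \<open>\<gamma>\<close>-contraction. At the fixpoint, unfolding a positive value \<open>d(s,t) = \<gamma> d(s',t')\<close> strictly increases
  it, so after at most \<open>|S|\<^sup>2\<close> unfoldings a degree is reached: \<open>d(s,t) = \<gamma>\<^sup>j c\<close> with \<open>j \<le> |S|\<^sup>2\<close>.
  The bit size of such a product is at most \<open>j\<parallel>\<gamma>\<parallel> + \<parallel>c\<parallel> + 3\<close>.\<close>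

section \<open>Bit sizes\<close>

declare nat_bits.simps[simp del]

lemma nat_bits_le:
  assumes "n < 2 ^ k" and "1 \<le> k"
  shows "nat_bits n \<le> k"
  using assms
proof (induction n arbitrary: k rule: nat_bits.induct)
  case (1 n)
  show ?case
  proof (cases "n \<le> 1")
    case True
    then show ?thesis using "1.prems" by (simp add: nat_bits.simps[of n])
  next
    case False
    with "1.prems" have "k \<noteq> 1" by auto
    with "1.prems" have "2 \<le> k" by linarith
    then have "2 ^ k = 2 * (2::nat) ^ (k - 1)" by (simp flip: power_Suc)
    with "1.prems" have "n div 2 < 2 ^ (k - 1)" by auto
    with "1.IH" False \<open>2 \<le> k\<close> have "nat_bits (n div 2) \<le> k - 1" by auto
    with False \<open>2 \<le> k\<close> show ?thesis by (simp add: nat_bits.simps[of n])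
  qed
qed

lemma less_two_power_nat_bits: "n < 2 ^ nat_bits n"
proof (induction n rule: nat_bits.induct)
  case (1 n)
  then show ?case by (cases "n \<le> 1") (auto simp: nat_bits.simps[of n])
qed

lemma nat_bits_pos: "1 \<le> nat_bits n"
  by (simp add: nat_bits.simps[of n])

lemma nat_bits_mono: "m \<le> n \<Longrightarrow> nat_bits m \<le> nat_bits n"
  using nat_bits_le[of m "nat_bits n"] less_two_power_nat_bits[of n] nat_bits_pos[of n] by linarith

lemma nat_bits_mult: "nat_bits (a * b) \<le> nat_bits a + nat_bits b"
proof -
  have "a * b < 2 ^ nat_bits a * 2 ^ nat_bits b"
    using less_two_power_nat_bits[of a] less_two_power_nat_bits[of b] by (simp add: mult_strict_mono)
  then show ?thesis
    using nat_bits_le[of "a * b" "nat_bits a + nat_bits b"] nat_bits_pos[of a] by (simp add: power_add)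
qed

lemma rat_bits_mult: "rat_bits (p * q) \<le> rat_bits p + rat_bits q"
proof -
  obtain a c where p: "quotient_of p = (a, c)" by (cases "quotient_of p")
  obtain b d where q: "quotient_of q = (b, d)" by (cases "quotient_of q")
  have "c > 0" "d > 0" using quotient_of_denom_pos[OF p] quotient_of_denom_pos[OF q] .
  define g where "g = gcd (a * b) (c * d)"
  have "g > 0" unfolding g_def using \<open>c > 0\<close> \<open>d > 0\<close> by (simp add: gcd_pos_int)
  have pq: "quotient_of (p * q) = (a * b div g, c * d div g)"
    using rat_times_code[of p q] p q \<open>c > 0\<close> \<open>d > 0\<close> by (simp add: normalize_def g_def Let_def)
  have shrink: "\<bar>k div g\<bar> \<le> \<bar>k\<bar>" if "g dvd k" for k
    using that \<open>g > 0\<close> by (auto simp: abs_mult mult_le_cancel_right1 elim!: dvdE)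
  have "\<bar>a * b div g\<bar> \<le> \<bar>a * b\<bar>" "c * d div g \<le> c * d"
    using shrink[of "a * b"] shrink[of "c * d"] \<open>c > 0\<close> \<open>d > 0\<close> unfolding g_def by auto
  then have "rat_bits (p * q) \<le> 1 + nat_bits (nat \<bar>a * b\<bar>) + nat_bits (nat (c * d))"
    unfolding rat_bits_def pq using nat_bits_mono by (simp add: add_mono nat_mono)
  also have "\<dots> \<le> 1 + (nat_bits (nat \<bar>a\<bar>) + nat_bits (nat \<bar>b\<bar>)) + (nat_bits (nat c) + nat_bits (nat d))"
    using nat_bits_mult[of "nat \<bar>a\<bar>" "nat \<bar>b\<bar>"] nat_bits_mult[of "nat c" "nat d"] \<open>c > 0\<close> \<open>d > 0\<close>
    by (simp add: abs_mult nat_mult_distrib)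
  also have "\<dots> \<le> rat_bits p + rat_bits q" unfolding rat_bits_def p q by simp
  finally show ?thesis .
qed

lemma rat_bits_0 [simp]: "rat_bits 0 = 3" and rat_bits_1 [simp]: "rat_bits 1 = 3"
  by (simp_all add: rat_bits_def nat_bits.simps)

lemma rat_bits_power: "rat_bits (r ^ j) \<le> 3 + j * rat_bits r"
proof (induction j)
  case (Suc j)
  then show ?case using rat_bits_mult[of r "r ^ j"] by simp
qed simp

lemma real_bits_of_rat [simp]: "real_bits (of_rat q) = rat_bits q"
  unfolding real_bits_def by simp

section \<open>Pseudo-ultrametrics and couplings\<close>

lemma pseudo_ultrametricD:
  assumes "pseudo_ultrametric S d"
  shows "x \<in> S \<Longrightarrow> y \<in> S \<Longrightarrow> 0 \<le> d x y" and "x \<in> S \<Longrightarrow> y \<in> S \<Longrightarrow> d x y \<le> 1"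
    and "x \<in> S \<Longrightarrow> d x x = 0" and "x \<in> S \<Longrightarrow> y \<in> S \<Longrightarrow> d x y = d y x"
    and "x \<in> S \<Longrightarrow> y \<in> S \<Longrightarrow> z \<in> S \<Longrightarrow> d x z \<le> max (d x y) (d y z)"
    and "x \<notin> S \<or> y \<notin> S \<Longrightarrow> d x y = 0"
  using assms unfolding pseudo_ultrametric_def by auto

lemma pseudo_ultrametric_nonneg: "pseudo_ultrametric S d \<Longrightarrow> \<forall>u\<in>S. \<forall>v\<in>S. 0 \<le> d u v"
  by (simp add: pseudo_ultrametricD(1))

definition coupling :: "nat set \<Rightarrow> (nat \<Rightarrow> real) \<Rightarrow> (nat \<Rightarrow> real) \<Rightarrow> (nat \<Rightarrow> nat \<Rightarrow> real) \<Rightarrow> bool" where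
  "coupling S \<mu> \<eta> x \<longleftrightarrow> (\<forall>u\<in>S. \<forall>v\<in>S. 0 \<le> x u v) \<and>
     (\<forall>u\<in>S. Max ((\<lambda>v. x u v) ` S) = \<mu> u) \<and> (\<forall>v\<in>S. Max ((\<lambda>u. x u v) ` S) = \<eta> v)"

definition coupling_cost :: "nat set \<Rightarrow> (nat \<Rightarrow> nat \<Rightarrow> real) \<Rightarrow> (nat \<Rightarrow> nat \<Rightarrow> real) \<Rightarrow> real" where
  "coupling_cost S d x = Max ((\<lambda>(u, v). min (d u v) (x u v)) ` (S \<times> S))"

text \<open>When the heights agree, the lifting is attained by a coupling whose cost is one of these
  values.\<close>
definition critical_values :: "nat set \<Rightarrow> (nat \<Rightarrow> nat \<Rightarrow> real) \<Rightarrow> (nat \<Rightarrow> real) \<Rightarrow> (nat \<Rightarrow> real) \<Rightarrow> real set" where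
  "critical_values S d \<mu> \<eta> = insert 0 ((\<lambda>(u, v). d u v) ` (S \<times> S) \<union> \<mu> ` S \<union> \<eta> ` S)"

definition coupling_comp :: "nat set \<Rightarrow> (nat \<Rightarrow> nat \<Rightarrow> real) \<Rightarrow> (nat \<Rightarrow> nat \<Rightarrow> real) \<Rightarrow> nat \<Rightarrow> nat \<Rightarrow> real" where
  "coupling_comp S x y = (\<lambda>u w. Max ((\<lambda>v. min (x u v) (y v w)) ` S))"

lemma lift_eq_Inf_coupling_cost:
  "lift S d \<mu> \<eta> =
     (if fmax \<mu> S \<noteq> fmax \<eta> S then 1 else Inf (coupling_cost S d ` {x. coupling S \<mu> \<eta> x}))"
proof -
  have "{min (d u v) (x u v) | u v. u \<in> S \<and> v \<in> S} = (\<lambda>(u, v). min (d u v) (x u v)) ` (S \<times> S)" for x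
    by auto
  then show ?thesis
    unfolding lift_def coupling_def coupling_cost_def by (simp add: setcompr_eq_image)
qed

locale finite_states =
  fixes S :: "nat set"
  assumes finite_states: "finite S" and states_nonempty: "S \<noteq> {}"
begin

lemma coupling_iff:
  "coupling S \<mu> \<eta> x \<longleftrightarrow> (\<forall>u\<in>S. \<forall>v\<in>S. 0 \<le> x u v) \<and>
     (\<forall>u\<in>S. (\<exists>v\<in>S. x u v = \<mu> u) \<and> (\<forall>v\<in>S. x u v \<le> \<mu> u)) \<and>
     (\<forall>v\<in>S. (\<exists>u\<in>S. x u v = \<eta> v) \<and> (\<forall>u\<in>S. x u v \<le> \<eta> v))"
proof -
  have "Max (f ` S) = m \<longleftrightarrow> (\<exists>v\<in>S. f v = m) \<and> (\<forall>v\<in>S. f v \<le> m)" for f :: "nat \<Rightarrow> real" and m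
    using finite_states states_nonempty by (auto simp: Max_eq_iff)
  then show ?thesis unfolding coupling_def by simp
qed

lemma coupling_cost_le_iff:
  "coupling_cost S d x \<le> b \<longleftrightarrow> (\<forall>u\<in>S. \<forall>v\<in>S. min (d u v) (x u v) \<le> b)"
  unfolding coupling_cost_def using finite_states states_nonempty by (auto simp: Max_le_iff)

lemma coupling_cost_ge: "u \<in> S \<Longrightarrow> v \<in> S \<Longrightarrow> min (d u v) (x u v) \<le> coupling_cost S d x"
  unfolding coupling_cost_def using finite_states by (intro Max_ge) auto

lemma coupling_cost_attained: "\<exists>u\<in>S. \<exists>v\<in>S. coupling_cost S d x = min (d u v) (x u v)"
proof -
  have "coupling_cost S d x \<in> (\<lambda>(u, v). min (d u v) (x u v)) ` (S \<times> S)"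
    unfolding coupling_cost_def using finite_states states_nonempty by (intro Max_in) auto
  then show ?thesis by auto
qed

lemma fmax_attained: "\<exists>u\<in>S. \<mu> u = fmax \<mu> S"
proof -
  have "fmax \<mu> S \<in> \<mu> ` S" unfolding fmax_def using finite_states states_nonempty by (intro Max_in) auto
  then show ?thesis by auto
qed

lemma fmax_ge: "u \<in> S \<Longrightarrow> \<mu> u \<le> fmax \<mu> S"
  unfolding fmax_def using finite_states by auto

lemma coupling_min:
  assumes "fuzzy_set S \<mu>" "fuzzy_set S \<eta>" and heights: "fmax \<mu> S = fmax \<eta> S"
  shows "coupling S \<mu> \<eta> (\<lambda>u v. min (\<mu> u) (\<eta> v))"
  unfolding coupling_iff
proof (intro conjI ballI)
  fix u v assume "u \<in> S" "v \<in> S"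
  then show "0 \<le> min (\<mu> u) (\<eta> v)" using assms(1,2) unfolding fuzzy_set_def by auto
next
  fix u assume "u \<in> S"
  obtain v0 where "v0 \<in> S" "\<eta> v0 = fmax \<eta> S" using fmax_attained by blast
  then show "\<exists>v\<in>S. min (\<mu> u) (\<eta> v) = \<mu> u"
    using fmax_ge[OF \<open>u \<in> S\<close>, of \<mu>] heights by (intro bexI[of _ v0]) auto
  show "min (\<mu> u) (\<eta> v) \<le> \<mu> u" for v by simp
next
  fix v assume "v \<in> S"
  obtain u0 where "u0 \<in> S" "\<mu> u0 = fmax \<mu> S" using fmax_attained by blast
  then show "\<exists>u\<in>S. min (\<mu> u) (\<eta> v) = \<eta> v"
    using fmax_ge[OF \<open>v \<in> S\<close>, of \<eta>] heights by (intro bexI[of _ u0]) auto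
  show "min (\<mu> u) (\<eta> v) \<le> \<eta> v" for u by simp
qed

text \<open>Lowering a coupling to the level \<open>g\<close> wherever \<open>d\<close> exceeds \<open>g\<close> keeps it a coupling,
  provided no critical value lies strictly between \<open>g\<close> and the cost of the coupling: an entry
  realising a marginal above a large distance is itself a critical value below the cost.\<close>
lemma coupling_truncate:
  assumes x: "coupling S \<mu> \<eta> x" and "0 \<le> g"
    and gap: "\<And>e. e \<in> critical_values S d \<mu> \<eta> \<Longrightarrow> e \<le> coupling_cost S d x \<Longrightarrow> e \<le> g"
  shows "coupling S \<mu> \<eta> (\<lambda>u v. if d u v \<le> g then min (\<mu> u) (\<eta> v) else min (min (\<mu> u) (\<eta> v)) g)"
    (is "coupling S \<mu> \<eta> ?x")
proof -
  note cx = x[unfolded coupling_iff]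
  have critical: "d u v \<in> critical_values S d \<mu> \<eta>" "\<mu> u \<in> critical_values S d \<mu> \<eta>"
    "\<eta> v \<in> critical_values S d \<mu> \<eta>" if "u \<in> S" "v \<in> S" for u v
    using that unfolding critical_values_def by auto
  have small: "x u v \<le> g" if "u \<in> S" "v \<in> S" "\<not> d u v \<le> g" "x u v \<in> critical_values S d \<mu> \<eta>" for u v
  proof -
    have "\<not> d u v \<le> coupling_cost S d x" using gap critical that by blast
    then have "x u v \<le> coupling_cost S d x" using coupling_cost_ge[OF that(1,2), of d x] by linarith
    then show ?thesis using gap that(4) by blast
  qed
  show ?thesis
    unfolding coupling_iff
  proof (intro conjI ballI)
    fix u v assume "u \<in> S" "v \<in> S"
    moreover have "0 \<le> \<mu> u" "0 \<le> \<eta> v" using cx calculation by (meson order_trans)+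
    ultimately show "0 \<le> ?x u v" using \<open>0 \<le> g\<close> by simp
  next
    fix u assume u: "u \<in> S"
    show "?x u v \<le> \<mu> u" for v by auto
    obtain v0 where v0: "v0 \<in> S" "x u v0 = \<mu> u" using cx u by blast
    then have "\<mu> u \<le> \<eta> v0" using cx u by metis
    then show "\<exists>v\<in>S. ?x u v = \<mu> u"
      using small[OF u v0(1)] v0 critical(2)[OF u v0(1)] by (intro bexI[OF _ v0(1)]) auto
  next
    fix v assume v: "v \<in> S"
    show "?x u v \<le> \<eta> v" for u by auto
    obtain u0 where u0: "u0 \<in> S" "x u0 v = \<eta> v" using cx v by blast
    then have "\<eta> v \<le> \<mu> u0" using cx v by metis
    then show "\<exists>u\<in>S. ?x u v = \<eta> v"
      using small[OF u0(1) v] u0 critical(3)[OF u0(1) v] by (intro bexI[OF _ u0(1)]) auto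
  qed
qed

lemma coupling_round:
  assumes d0: "\<forall>u\<in>S. \<forall>v\<in>S. 0 \<le> d u v" and x: "coupling S \<mu> \<eta> x"
  obtains x' where "coupling S \<mu> \<eta> x'" "coupling_cost S d x' \<le> coupling_cost S d x"
    "coupling_cost S d x' \<in> critical_values S d \<mu> \<eta>"
proof -
  define m where "m = coupling_cost S d x"
  define G where "G = {e \<in> critical_values S d \<mu> \<eta>. e \<le> m}"
  obtain u1 where "u1 \<in> S" using states_nonempty by blast
  then have "0 \<le> m"
    using coupling_cost_ge[of u1 u1 d x] d0 x unfolding m_def coupling_def by (meson min.boundedI order_trans)
  then have "0 \<in> G" unfolding G_def critical_values_def by simp
  have "finite G" unfolding G_def critical_values_def using finite_states by auto
  define g where "g = Max G"
  have "g \<in> critical_values S d \<mu> \<eta>" "g \<le> m"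
    using Max_in[OF \<open>finite G\<close>] \<open>0 \<in> G\<close> unfolding g_def G_def by auto
  have gap: "e \<le> g" if "e \<in> critical_values S d \<mu> \<eta>" "e \<le> m" for e
    using that \<open>finite G\<close> unfolding g_def G_def by simp
  then have "0 \<le> g" using \<open>0 \<le> m\<close> unfolding critical_values_def by simp
  define x' where "x' = (\<lambda>u v. if d u v \<le> g then min (\<mu> u) (\<eta> v) else min (min (\<mu> u) (\<eta> v)) g)"
  have "coupling S \<mu> \<eta> x'"
    unfolding x'_def using coupling_truncate[OF x \<open>0 \<le> g\<close>] gap unfolding m_def by blast
  moreover have "coupling_cost S d x' \<le> g"
    unfolding coupling_cost_le_iff x'_def by auto
  moreover have "coupling_cost S d x' \<in> critical_values S d \<mu> \<eta>"
  proof -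
    obtain u v where uv: "u \<in> S" "v \<in> S" "coupling_cost S d x' = min (d u v) (x' u v)"
      using coupling_cost_attained by blast
    have "d u v \<in> critical_values S d \<mu> \<eta>" "\<mu> u \<in> critical_values S d \<mu> \<eta>"
      "\<eta> v \<in> critical_values S d \<mu> \<eta>"
      using uv unfolding critical_values_def by auto
    then show ?thesis
      using uv \<open>g \<in> critical_values S d \<mu> \<eta>\<close> unfolding x'_def by (auto simp: min_def)
  qed
  ultimately show ?thesis using that \<open>g \<le> m\<close> unfolding m_def by fastforce
qed

lemma lift_attained:
  assumes d0: "\<forall>u\<in>S. \<forall>v\<in>S. 0 \<le> d u v" and "fuzzy_set S \<mu>" "fuzzy_set S \<eta>"
    and heights: "fmax \<mu> S = fmax \<eta> S"
  obtains x where "coupling S \<mu> \<eta> x" "lift S d \<mu> \<eta> = coupling_cost S d x"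
    "lift S d \<mu> \<eta> \<in> critical_values S d \<mu> \<eta>"
    "\<And>y. coupling S \<mu> \<eta> y \<Longrightarrow> lift S d \<mu> \<eta> \<le> coupling_cost S d y"
proof -
  define W where "W = coupling_cost S d ` {x. coupling S \<mu> \<eta> x} \<inter> critical_values S d \<mu> \<eta>"
  have "finite W" unfolding W_def critical_values_def using finite_states by auto
  moreover have "W \<noteq> {}"
    using coupling_round[OF d0 coupling_min[OF assms(2-4)]] unfolding W_def by blast
  ultimately have "Min W \<in> W" by simp
  have Min_le: "Min W \<le> coupling_cost S d y" if y: "coupling S \<mu> \<eta> y" for y
  proof -
    obtain y' where "coupling S \<mu> \<eta> y'" "coupling_cost S d y' \<le> coupling_cost S d y"
      "coupling_cost S d y' \<in> critical_values S d \<mu> \<eta>"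
      using coupling_round[OF d0 y] .
    then have "coupling_cost S d y' \<in> W" unfolding W_def by blast
    then have "Min W \<le> coupling_cost S d y'" using \<open>finite W\<close> by simp
    with \<open>coupling_cost S d y' \<le> coupling_cost S d y\<close> show ?thesis by linarith
  qed
  have "lift S d \<mu> \<eta> = Min W"
    unfolding lift_eq_Inf_coupling_cost using heights \<open>Min W \<in> W\<close> Min_le unfolding W_def
    by (auto intro!: cInf_eq_minimum)
  with \<open>Min W \<in> W\<close> Min_le show ?thesis using that unfolding W_def by auto
qed

lemma lift_in_critical_values:
  assumes "\<forall>u\<in>S. \<forall>v\<in>S. 0 \<le> d u v" and "fuzzy_set S \<mu>" "fuzzy_set S \<eta>"
  shows "lift S d \<mu> \<eta> \<in> insert 1 (critical_values S d \<mu> \<eta>)"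
proof (cases "fmax \<mu> S = fmax \<eta> S")
  case True
  then show ?thesis using lift_attained[OF assms True] by blast
qed (simp add: lift_eq_Inf_coupling_cost)

lemma lift_bounds:
  assumes d0: "\<forall>u\<in>S. \<forall>v\<in>S. 0 \<le> d u v" and \<mu>: "fuzzy_set S \<mu>" and \<eta>: "fuzzy_set S \<eta>"
  shows "0 \<le> lift S d \<mu> \<eta>" "lift S d \<mu> \<eta> \<le> 1"
proof -
  have "0 \<le> lift S d \<mu> \<eta> \<and> lift S d \<mu> \<eta> \<le> 1"
  proof (cases "fmax \<mu> S = fmax \<eta> S")
    case True
    then obtain x where x: "coupling S \<mu> \<eta> x" "lift S d \<mu> \<eta> = coupling_cost S d x"
      using lift_attained[OF d0 \<mu> \<eta>] by blast
    obtain u v where uv: "u \<in> S" "v \<in> S" "coupling_cost S d x = min (d u v) (x u v)"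
      using coupling_cost_attained by blast
    then have "0 \<le> x u v" "x u v \<le> \<mu> u" "\<mu> u \<le> 1"
      using x(1) \<mu> unfolding coupling_iff fuzzy_set_def by auto
    then show ?thesis using x(2) uv d0 by auto
  qed (simp add: lift_eq_Inf_coupling_cost)
  then show "0 \<le> lift S d \<mu> \<eta>" "lift S d \<mu> \<eta> \<le> 1" by auto
qed

lemma lift_le_add:
  assumes d1: "\<forall>u\<in>S. \<forall>v\<in>S. 0 \<le> d1 u v" and d2: "\<forall>u\<in>S. \<forall>v\<in>S. 0 \<le> d2 u v"
    and le: "\<forall>u\<in>S. \<forall>v\<in>S. d1 u v \<le> d2 u v + e" and "0 \<le> e"
    and \<mu>: "fuzzy_set S \<mu>" and \<eta>: "fuzzy_set S \<eta>"
  shows "lift S d1 \<mu> \<eta> \<le> lift S d2 \<mu> \<eta> + e"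
proof (cases "fmax \<mu> S = fmax \<eta> S")
  case True
  obtain x where x: "coupling S \<mu> \<eta> x" "lift S d2 \<mu> \<eta> = coupling_cost S d2 x"
    using lift_attained[OF d2 \<mu> \<eta> True] by blast
  have "lift S d1 \<mu> \<eta> \<le> coupling_cost S d1 x"
    using lift_attained[OF d1 \<mu> \<eta> True] x(1) by blast
  also have "\<dots> \<le> coupling_cost S d2 x + e"
    unfolding coupling_cost_le_iff
  proof (intro ballI)
    fix u v assume "u \<in> S" "v \<in> S"
    then have "min (d2 u v) (x u v) \<le> coupling_cost S d2 x" "d1 u v \<le> d2 u v + e"
      using coupling_cost_ge le by auto
    then show "min (d1 u v) (x u v) \<le> coupling_cost S d2 x + e" using \<open>0 \<le> e\<close> by linarith
  qed
  finally show ?thesis using x(2) by simp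
qed (use \<open>0 \<le> e\<close> in \<open>simp add: lift_eq_Inf_coupling_cost\<close>)

lemma lift_self:
  assumes d0: "\<forall>u\<in>S. \<forall>v\<in>S. 0 \<le> d u v" and diag: "\<forall>u\<in>S. d u u = 0" and \<mu>: "fuzzy_set S \<mu>"
  shows "lift S d \<mu> \<mu> = 0"
proof -
  define diagonal where "diagonal = (\<lambda>u v. if u = v then \<mu> u else (0::real))"
  have "coupling S \<mu> \<mu> diagonal"
    unfolding coupling_iff diagonal_def using \<mu> unfolding fuzzy_set_def by auto
  then have "lift S d \<mu> \<mu> \<le> coupling_cost S d diagonal"
    using lift_attained[OF d0 \<mu> \<mu> refl] by blast
  also have "\<dots> \<le> 0" unfolding coupling_cost_le_iff diagonal_def using diag by auto
  finally show ?thesis using lift_bounds(1)[OF d0 \<mu> \<mu>] by simp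
qed

lemma coupling_comp_ge: "v \<in> S \<Longrightarrow> min (x u v) (y v w) \<le> coupling_comp S x y u w"
  unfolding coupling_comp_def using finite_states by (intro Max_ge) auto

lemma coupling_comp_le_iff: "coupling_comp S x y u w \<le> b \<longleftrightarrow> (\<forall>v\<in>S. min (x u v) (y v w) \<le> b)"
  unfolding coupling_comp_def using finite_states states_nonempty by (simp add: Max_le_iff)

lemma coupling_comp_attained: "\<exists>v\<in>S. coupling_comp S x y u w = min (x u v) (y v w)"
proof -
  have "coupling_comp S x y u w \<in> (\<lambda>v. min (x u v) (y v w)) ` S"
    unfolding coupling_comp_def using finite_states states_nonempty by (intro Max_in) auto
  then show ?thesis by auto
qed

lemma coupling_coupling_comp:
  assumes x: "coupling S \<mu> \<eta> x" and y: "coupling S \<eta> \<nu> y"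
  shows "coupling S \<mu> \<nu> (coupling_comp S x y)"
proof -
  note cx = x[unfolded coupling_iff] and cy = y[unfolded coupling_iff]
  show ?thesis
    unfolding coupling_iff
  proof (intro conjI ballI)
    fix u w assume "u \<in> S" "w \<in> S"
    then show "0 \<le> coupling_comp S x y u w"
      using coupling_comp_ge[of u x u y w] cx cy by (meson min.boundedI order_trans)
  next
    fix u assume u: "u \<in> S"
    show le: "coupling_comp S x y u w \<le> \<mu> u" for w
      unfolding coupling_comp_le_iff using cx u by (meson min.coboundedI1 order_trans)
    obtain v0 where v0: "v0 \<in> S" "x u v0 = \<mu> u" using cx u by blast
    then have "\<mu> u \<le> \<eta> v0" using cx u by metis
    obtain w0 where "w0 \<in> S" "y v0 w0 = \<eta> v0" using cy v0 by blast
    then have "\<mu> u \<le> coupling_comp S x y u w0"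
      using coupling_comp_ge[OF v0(1), of x u y w0] v0 \<open>\<mu> u \<le> \<eta> v0\<close> by simp
    then show "\<exists>w\<in>S. coupling_comp S x y u w = \<mu> u" using le \<open>w0 \<in> S\<close> by (meson order_antisym)
  next
    fix w assume w: "w \<in> S"
    show le: "coupling_comp S x y u w \<le> \<nu> w" for u
      unfolding coupling_comp_le_iff using cy w by (meson min.coboundedI2 order_trans)
    obtain v0 where v0: "v0 \<in> S" "y v0 w = \<nu> w" using cy w by blast
    then have "\<nu> w \<le> \<eta> v0" using cy w by metis
    obtain u0 where "u0 \<in> S" "x u0 v0 = \<eta> v0" using cx v0 by blast
    then have "\<nu> w \<le> coupling_comp S x y u0 w"
      using coupling_comp_ge[OF v0(1), of x u0 y w] v0 \<open>\<nu> w \<le> \<eta> v0\<close> by simp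
    then show "\<exists>u\<in>S. coupling_comp S x y u w = \<nu> w" using le \<open>u0 \<in> S\<close> by (meson order_antisym)
  qed
qed

lemma coupling_cost_comp_le:
  assumes ultra: "\<And>u v w. u \<in> S \<Longrightarrow> v \<in> S \<Longrightarrow> w \<in> S \<Longrightarrow> d u w \<le> max (d u v) (d v w)"
  shows "coupling_cost S d (coupling_comp S x y) \<le> max (coupling_cost S d x) (coupling_cost S d y)"
  unfolding coupling_cost_le_iff
proof (intro ballI)
  fix u w assume "u \<in> S" "w \<in> S"
  obtain v where v: "v \<in> S" "coupling_comp S x y u w = min (x u v) (y v w)"
    using coupling_comp_attained by blast
  have "min (d u v) (x u v) \<le> coupling_cost S d x" "min (d v w) (y v w) \<le> coupling_cost S d y"
    using coupling_cost_ge \<open>u \<in> S\<close> \<open>w \<in> S\<close> v(1) by auto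
  moreover have "d u w \<le> max (d u v) (d v w)" using ultra \<open>u \<in> S\<close> \<open>w \<in> S\<close> v(1) by blast
  ultimately show "min (d u w) (coupling_comp S x y u w) \<le> max (coupling_cost S d x) (coupling_cost S d y)"
    unfolding v(2) by linarith
qed

lemma lift_triangle:
  assumes d: "pseudo_ultrametric S d"
    and \<mu>: "fuzzy_set S \<mu>" and \<eta>: "fuzzy_set S \<eta>" and \<nu>: "fuzzy_set S \<nu>"
  shows "lift S d \<mu> \<nu> \<le> max (lift S d \<mu> \<eta>) (lift S d \<eta> \<nu>)"
proof (cases "fmax \<mu> S = fmax \<eta> S \<and> fmax \<eta> S = fmax \<nu> S")
  case True
  note d0 = pseudo_ultrametric_nonneg[OF d]
  obtain x where x: "coupling S \<mu> \<eta> x" "lift S d \<mu> \<eta> = coupling_cost S d x"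
    using lift_attained[OF d0 \<mu> \<eta>] True by blast
  obtain y where y: "coupling S \<eta> \<nu> y" "lift S d \<eta> \<nu> = coupling_cost S d y"
    using lift_attained[OF d0 \<eta> \<nu>] True by blast
  have "lift S d \<mu> \<nu> \<le> coupling_cost S d (coupling_comp S x y)"
    using lift_attained[OF d0 \<mu> \<nu>] coupling_coupling_comp[OF x(1) y(1)] True by metis
  also have "\<dots> \<le> max (coupling_cost S d x) (coupling_cost S d y)"
    using d unfolding pseudo_ultrametric_def by (intro coupling_cost_comp_le) blast
  finally show ?thesis using x(2) y(2) by simp
next
  case False
  note d0 = pseudo_ultrametric_nonneg[OF d]
  from False have "lift S d \<mu> \<eta> = 1 \<or> lift S d \<eta> \<nu> = 1"
    unfolding lift_eq_Inf_coupling_cost by auto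
  then show ?thesis using lift_bounds(2)[OF d0 \<mu> \<nu>] by linarith
qed

end

section \<open>Hausdorff distance of fuzzy families\<close>

definition fuzzy_family :: "nat set \<Rightarrow> (nat \<Rightarrow> real) set \<Rightarrow> bool" where
  "fuzzy_family S Z \<longleftrightarrow> finite Z \<and> (\<forall>\<mu>\<in>Z. fuzzy_set S \<mu>)"

lemma lift_set_le_lift: "finite Z \<Longrightarrow> \<eta> \<in> Z \<Longrightarrow> lift_set S d \<mu> Z \<le> lift S d \<mu> \<eta>"
  unfolding lift_set_def by auto

lemma lift_set_attained:
  assumes "finite Z" "Z \<noteq> {}"
  obtains \<eta> where "\<eta> \<in> Z" "lift_set S d \<mu> Z = lift S d \<mu> \<eta>"
proof -
  have "Min ((\<lambda>\<eta>. lift S d \<mu> \<eta>) ` Z) \<in> (\<lambda>\<eta>. lift S d \<mu> \<eta>) ` Z"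
    using assms by (intro Min_in) auto
  then obtain \<eta> where "\<eta> \<in> Z" "Min ((\<lambda>\<eta>. lift S d \<mu> \<eta>) ` Z) = lift S d \<mu> \<eta>" by blast
  then show ?thesis using that assms unfolding lift_set_def by simp
qed

lemma lift_set_in: "finite Z \<Longrightarrow> lift_set S d \<mu> Z \<in> insert 1 ((\<lambda>\<eta>. lift S d \<mu> \<eta>) ` Z)"
  by (cases "Z = {}") (auto simp: lift_set_def elim: lift_set_attained[of Z S d \<mu>])

lemma hausdorff_commute: "hausdorff S d Y Z = hausdorff S d Z Y"
  unfolding hausdorff_def by (auto simp: max.commute)

lemma hausdorff_nonneg: "finite Y \<Longrightarrow> finite Z \<Longrightarrow> 0 \<le> hausdorff S d Y Z"
  unfolding hausdorff_def by (simp add: le_max_iff_disj)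

lemma lift_set_le_hausdorff:
  "finite Y \<Longrightarrow> finite Z \<Longrightarrow> \<mu> \<in> Y \<Longrightarrow> lift_set S d \<mu> Z \<le> hausdorff S d Y Z"
  unfolding hausdorff_def by (auto intro: max.coboundedI1)

lemma lift_set_le_hausdorff':
  "finite Y \<Longrightarrow> finite Z \<Longrightarrow> \<eta> \<in> Z \<Longrightarrow> lift_set S d \<eta> Y \<le> hausdorff S d Y Z"
  using lift_set_le_hausdorff[of Z Y \<eta> S d] by (simp add: hausdorff_commute)

lemma hausdorff_le_iff:
  assumes "finite Y" "finite Z" "0 \<le> b"
  shows "hausdorff S d Y Z \<le> b \<longleftrightarrow> (\<forall>\<mu>\<in>Y. lift_set S d \<mu> Z \<le> b) \<and> (\<forall>\<eta>\<in>Z. lift_set S d \<eta> Y \<le> b)"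
  using assms unfolding hausdorff_def by auto

lemma hausdorff_in:
  assumes "finite Y" "finite Z"
  shows "hausdorff S d Y Z \<in> insert 0 ((\<lambda>\<mu>. lift_set S d \<mu> Z) ` Y \<union> (\<lambda>\<eta>. lift_set S d \<eta> Y) ` Z)"
proof -
  have "Max (insert 0 X) \<in> insert 0 X" if "finite X" for X :: "real set"
    using that by (intro Max_in) auto
  then show ?thesis using assms unfolding hausdorff_def by (auto simp: max_def)
qed

context finite_states
begin

lemma lift_set_le_1:
  assumes d: "pseudo_ultrametric S d" and Z: "fuzzy_family S Z" and \<mu>: "fuzzy_set S \<mu>"
  shows "lift_set S d \<mu> Z \<le> 1"
proof (cases "Z = {}")
  case False
  then obtain \<eta> where "\<eta> \<in> Z" "lift_set S d \<mu> Z = lift S d \<mu> \<eta>"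
    using Z lift_set_attained unfolding fuzzy_family_def by metis
  then show ?thesis
    using lift_bounds(2)[OF pseudo_ultrametric_nonneg[OF d] \<mu>] Z unfolding fuzzy_family_def by auto
qed (simp add: lift_set_def)

lemma lift_set_le_add:
  assumes d1: "pseudo_ultrametric S d1" and d2: "pseudo_ultrametric S d2"
    and le: "\<forall>u\<in>S. \<forall>v\<in>S. d1 u v \<le> d2 u v + e" and "0 \<le> e"
    and Z: "fuzzy_family S Z" and \<mu>: "fuzzy_set S \<mu>"
  shows "lift_set S d1 \<mu> Z \<le> lift_set S d2 \<mu> Z + e"
proof (cases "Z = {}")
  case False
  then obtain \<eta> where \<eta>: "\<eta> \<in> Z" "lift_set S d2 \<mu> Z = lift S d2 \<mu> \<eta>"
    using Z lift_set_attained unfolding fuzzy_family_def by metis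
  have "lift_set S d1 \<mu> Z \<le> lift S d1 \<mu> \<eta>"
    using lift_set_le_lift Z \<eta>(1) unfolding fuzzy_family_def by blast
  also have "\<dots> \<le> lift S d2 \<mu> \<eta> + e"
    using lift_le_add[OF pseudo_ultrametric_nonneg[OF d1] pseudo_ultrametric_nonneg[OF d2] le \<open>0 \<le> e\<close> \<mu>]
      Z \<eta>(1) unfolding fuzzy_family_def by blast
  finally show ?thesis using \<eta>(2) by simp
qed (use \<open>0 \<le> e\<close> in \<open>simp add: lift_set_def\<close>)

lemma lift_set_triangle:
  assumes d: "pseudo_ultrametric S d" and Z: "fuzzy_family S Z" and W: "fuzzy_family S W"
    and \<mu>: "fuzzy_set S \<mu>"
  shows "lift_set S d \<mu> W \<le> max (lift_set S d \<mu> Z) (hausdorff S d Z W)"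
proof (cases "Z = {}")
  case True
  then show ?thesis using lift_set_le_1[OF d W \<mu>] by (simp add: lift_set_def)
next
  case False
  then obtain \<eta> where \<eta>: "\<eta> \<in> Z" "lift_set S d \<mu> Z = lift S d \<mu> \<eta>"
    using Z lift_set_attained unfolding fuzzy_family_def by metis
  show ?thesis
  proof (cases "W = {}")
    case True
    then show ?thesis
      using lift_set_le_hausdorff[of Z W \<eta> S d] Z \<eta>(1) by (simp add: fuzzy_family_def lift_set_def)
  next
    case False
    then obtain \<nu> where \<nu>: "\<nu> \<in> W" "lift_set S d \<eta> W = lift S d \<eta> \<nu>"
      using W lift_set_attained unfolding fuzzy_family_def by metis
    have "lift_set S d \<mu> W \<le> lift S d \<mu> \<nu>"
      using lift_set_le_lift W \<nu>(1) unfolding fuzzy_family_def by blast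
    also have "\<dots> \<le> max (lift S d \<mu> \<eta>) (lift S d \<eta> \<nu>)"
      using lift_triangle[OF d \<mu>] Z W \<eta>(1) \<nu>(1) unfolding fuzzy_family_def by blast
    also have "\<dots> \<le> max (lift_set S d \<mu> Z) (hausdorff S d Z W)"
      using lift_set_le_hausdorff[of Z W \<eta> S d] Z W \<eta> \<nu>(2)
      unfolding fuzzy_family_def by (auto intro: max.mono)
    finally show ?thesis .
  qed
qed

lemma hausdorff_le_1:
  assumes d: "pseudo_ultrametric S d" and Y: "fuzzy_family S Y" and Z: "fuzzy_family S Z"
  shows "hausdorff S d Y Z \<le> 1"
  using Y Z lift_set_le_1[OF d Z] lift_set_le_1[OF d Y]
  by (subst hausdorff_le_iff) (auto simp: fuzzy_family_def)

lemma hausdorff_self: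
  assumes d: "pseudo_ultrametric S d" and Y: "fuzzy_family S Y"
  shows "hausdorff S d Y Y = 0"
proof -
  have "lift_set S d \<mu> Y \<le> 0" if "\<mu> \<in> Y" for \<mu>
  proof -
    have "lift_set S d \<mu> Y \<le> lift S d \<mu> \<mu>"
      using lift_set_le_lift Y that unfolding fuzzy_family_def by blast
    also have "\<dots> = 0"
      using lift_self[OF pseudo_ultrametric_nonneg[OF d]] d Y that
      unfolding pseudo_ultrametric_def fuzzy_family_def by blast
    finally show ?thesis .
  qed
  then have "hausdorff S d Y Y \<le> 0" using Y by (subst hausdorff_le_iff) (auto simp: fuzzy_family_def)
  with hausdorff_nonneg show ?thesis using Y unfolding fuzzy_family_def by (metis order_antisym)
qed

lemma hausdorff_triangle:
  assumes d: "pseudo_ultrametric S d"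
    and Y: "fuzzy_family S Y" and Z: "fuzzy_family S Z" and W: "fuzzy_family S W"
  shows "hausdorff S d Y W \<le> max (hausdorff S d Y Z) (hausdorff S d Z W)"
proof -
  have fin: "finite Y" "finite Z" "finite W" using Y Z W unfolding fuzzy_family_def by auto
  have "lift_set S d \<mu> W \<le> max (hausdorff S d Y Z) (hausdorff S d Z W)" if "\<mu> \<in> Y" for \<mu>
    using lift_set_triangle[OF d Z W] lift_set_le_hausdorff[OF fin(1,2) that, of S d] Y that
    unfolding fuzzy_family_def by (smt (verit, best))
  moreover have "lift_set S d \<nu> Y \<le> max (hausdorff S d Y Z) (hausdorff S d Z W)" if "\<nu> \<in> W" for \<nu>
    using lift_set_triangle[OF d Z Y] lift_set_le_hausdorff'[OF fin(2,3) that, of S d]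
      hausdorff_commute[of S d Y Z] W that
    unfolding fuzzy_family_def by (smt (verit, best))
  ultimately show ?thesis
    using fin hausdorff_nonneg[OF fin(1,2)] by (subst hausdorff_le_iff) (auto simp: le_max_iff_disj)
qed

lemma hausdorff_le_add:
  assumes d1: "pseudo_ultrametric S d1" and d2: "pseudo_ultrametric S d2"
    and le: "\<forall>u\<in>S. \<forall>v\<in>S. d1 u v \<le> d2 u v + e" and "0 \<le> e"
    and Y: "fuzzy_family S Y" and Z: "fuzzy_family S Z"
  shows "hausdorff S d1 Y Z \<le> hausdorff S d2 Y Z + e"
proof -
  have fin: "finite Y" "finite Z" using Y Z unfolding fuzzy_family_def by auto
  have "lift_set S d1 \<mu> Z \<le> hausdorff S d2 Y Z + e" if "\<mu> \<in> Y" for \<mu>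
    using lift_set_le_add[OF d1 d2 le \<open>0 \<le> e\<close> Z] lift_set_le_hausdorff[OF fin that, of S d2] Y that
    unfolding fuzzy_family_def by fastforce
  moreover have "lift_set S d1 \<eta> Y \<le> hausdorff S d2 Y Z + e" if "\<eta> \<in> Z" for \<eta>
    using lift_set_le_add[OF d1 d2 le \<open>0 \<le> e\<close> Y] lift_set_le_hausdorff'[OF fin that, of S d2] Z that
    unfolding fuzzy_family_def by fastforce
  ultimately show ?thesis
    using fin hausdorff_nonneg[OF fin, of S d2] \<open>0 \<le> e\<close> by (subst hausdorff_le_iff) auto
qed

end

section \<open>The operator Delta\<close>

definition transition_dist :: "nat set \<Rightarrow> 'a set \<Rightarrow> (nat \<Rightarrow> 'a \<Rightarrow> (nat \<Rightarrow> real) set)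
    \<Rightarrow> (nat \<Rightarrow> nat \<Rightarrow> real) \<Rightarrow> nat \<Rightarrow> nat \<Rightarrow> real" where
  "transition_dist S A \<delta> d s t = Max (insert 0 ((\<lambda>a. hausdorff S d (\<delta> s a) (\<delta> t a)) ` A))"

definition degrees :: "nat set \<Rightarrow> 'a set \<Rightarrow> (nat \<Rightarrow> 'a \<Rightarrow> (nat \<Rightarrow> real) set) \<Rightarrow> real set" where
  "degrees S A \<delta> = {0, 1} \<union> {\<mu> u | s a \<mu> u. s \<in> S \<and> a \<in> A \<and> \<mu> \<in> \<delta> s a \<and> u \<in> S}"

lemma Delta_eq_transition_dist:
  "s \<in> S \<Longrightarrow> t \<in> S \<Longrightarrow> Delta S A \<delta> \<gamma> d s t = \<gamma> * transition_dist S A \<delta> d s t"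
  unfolding Delta_def transition_dist_def by simp

locale fuzzy_ts = finite_states S for S +
  fixes A :: "'a set" and \<delta> :: "nat \<Rightarrow> 'a \<Rightarrow> (nat \<Rightarrow> real) set"
  assumes finite_actions: "finite A"
    and transitions_fuzzy: "\<And>s a. s \<in> S \<Longrightarrow> a \<in> A \<Longrightarrow> fuzzy_family S (\<delta> s a)"
begin

lemma transition_dist_le_iff:
  "0 \<le> b \<Longrightarrow> transition_dist S A \<delta> d s t \<le> b \<longleftrightarrow> (\<forall>a\<in>A. hausdorff S d (\<delta> s a) (\<delta> t a) \<le> b)"
  unfolding transition_dist_def using finite_actions by simp

lemma hausdorff_le_transition_dist:
  "a \<in> A \<Longrightarrow> hausdorff S d (\<delta> s a) (\<delta> t a) \<le> transition_dist S A \<delta> d s t"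
  unfolding transition_dist_def using finite_actions by simp

lemma transition_dist_nonneg: "0 \<le> transition_dist S A \<delta> d s t"
  unfolding transition_dist_def using finite_actions by simp

lemma transition_dist_pseudo_ultrametric:
  assumes d: "pseudo_ultrametric S d"
  shows "\<And>s t. s \<in> S \<Longrightarrow> t \<in> S \<Longrightarrow> transition_dist S A \<delta> d s t \<le> 1"
    and "\<And>s. s \<in> S \<Longrightarrow> transition_dist S A \<delta> d s s = 0"
    and "\<And>s t. transition_dist S A \<delta> d s t = transition_dist S A \<delta> d t s"
    and "\<And>s t r. s \<in> S \<Longrightarrow> t \<in> S \<Longrightarrow> r \<in> S \<Longrightarrow>
           transition_dist S A \<delta> d s r \<le> max (transition_dist S A \<delta> d s t) (transition_dist S A \<delta> d t r)"
proof -
  fix s t assume "s \<in> S" "t \<in> S"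
  then show "transition_dist S A \<delta> d s t \<le> 1"
    using hausdorff_le_1[OF d] transitions_fuzzy by (simp add: transition_dist_le_iff)
next
  fix s assume "s \<in> S"
  then show "transition_dist S A \<delta> d s s = 0"
    using hausdorff_self[OF d] transitions_fuzzy transition_dist_nonneg[of d s s]
    by (simp add: transition_dist_le_iff order_antisym_conv)
next
  fix s t show "transition_dist S A \<delta> d s t = transition_dist S A \<delta> d t s"
    unfolding transition_dist_def by (simp add: hausdorff_commute)
next
  fix s t r assume str: "s \<in> S" "t \<in> S" "r \<in> S"
  have "hausdorff S d (\<delta> s a) (\<delta> r a) \<le> max (transition_dist S A \<delta> d s t) (transition_dist S A \<delta> d t r)"
    if "a \<in> A" for a
  proof -
    have "hausdorff S d (\<delta> s a) (\<delta> r a) \<le>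
        max (hausdorff S d (\<delta> s a) (\<delta> t a)) (hausdorff S d (\<delta> t a) (\<delta> r a))"
      using hausdorff_triangle[OF d] transitions_fuzzy str that by blast
    also have "\<dots> \<le> max (transition_dist S A \<delta> d s t) (transition_dist S A \<delta> d t r)"
      by (intro max.mono hausdorff_le_transition_dist that)
    finally show ?thesis .
  qed
  moreover have "0 \<le> max (transition_dist S A \<delta> d s t) (transition_dist S A \<delta> d t r)"
    using transition_dist_nonneg[of d s t] by (simp add: le_max_iff_disj)
  ultimately show "transition_dist S A \<delta> d s r \<le> max (transition_dist S A \<delta> d s t) (transition_dist S A \<delta> d t r)"
    using transition_dist_le_iff by blast
qed

lemma transition_dist_le_add:
  assumes "pseudo_ultrametric S d1" "pseudo_ultrametric S d2"
    and "\<forall>u\<in>S. \<forall>v\<in>S. d1 u v \<le> d2 u v + e" and "0 \<le> e" and "s \<in> S" "t \<in> S"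
  shows "transition_dist S A \<delta> d1 s t \<le> transition_dist S A \<delta> d2 s t + e"
proof -
  have "hausdorff S d1 (\<delta> s a) (\<delta> t a) \<le> transition_dist S A \<delta> d2 s t + e" if "a \<in> A" for a
  proof -
    have "hausdorff S d1 (\<delta> s a) (\<delta> t a) \<le> hausdorff S d2 (\<delta> s a) (\<delta> t a) + e"
      using hausdorff_le_add[OF assms(1-4)] transitions_fuzzy assms(5,6) that by blast
    also have "\<dots> \<le> transition_dist S A \<delta> d2 s t + e"
      using hausdorff_le_transition_dist[OF that] by simp
    finally show ?thesis .
  qed
  then show ?thesis using transition_dist_nonneg[of d2 s t] \<open>0 \<le> e\<close> by (simp add: transition_dist_le_iff)
qed

lemma lift_in_degrees:
  assumes d: "pseudo_ultrametric S d" and "s \<in> S" "t \<in> S" "a \<in> A" "b \<in> A"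
    and \<mu>: "\<mu> \<in> \<delta> s a" and \<eta>: "\<eta> \<in> \<delta> t b"
  shows "lift S d \<mu> \<eta> \<in> degrees S A \<delta> \<union> (\<lambda>(u, v). d u v) ` (S \<times> S)"
proof -
  have "fuzzy_set S \<mu>" "fuzzy_set S \<eta>"
    using transitions_fuzzy assms(2-5) \<mu> \<eta> unfolding fuzzy_family_def by auto
  then have "lift S d \<mu> \<eta> \<in> insert 1 (critical_values S d \<mu> \<eta>)"
    using lift_in_critical_values pseudo_ultrametric_nonneg[OF d] by blast
  moreover have "insert 1 (critical_values S d \<mu> \<eta>) \<subseteq> degrees S A \<delta> \<union> (\<lambda>(u, v). d u v) ` (S \<times> S)"
    using assms(2-5) \<mu> \<eta> unfolding critical_values_def degrees_def by auto
  ultimately show ?thesis by blast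
qed

lemma hausdorff_in_degrees:
  assumes d: "pseudo_ultrametric S d" and "s \<in> S" "t \<in> S" "a \<in> A"
  shows "hausdorff S d (\<delta> s a) (\<delta> t a) \<in> degrees S A \<delta> \<union> (\<lambda>(u, v). d u v) ` (S \<times> S)"
    (is "_ \<in> ?T")
proof -
  have family: "fuzzy_family S (\<delta> s a)" "fuzzy_family S (\<delta> t a)"
    using transitions_fuzzy assms(2-4) by auto
  have lift_set_in_T: "lift_set S d \<mu> Z \<in> ?T"
    if "\<mu> \<in> \<delta> s a \<union> \<delta> t a" "Z = \<delta> s a \<or> Z = \<delta> t a" for \<mu> Z
  proof -
    have "finite Z" using that(2) family unfolding fuzzy_family_def by auto
    then have "lift_set S d \<mu> Z \<in> insert 1 ((\<lambda>\<eta>. lift S d \<mu> \<eta>) ` Z)" by (rule lift_set_in)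
    moreover have "insert 1 ((\<lambda>\<eta>. lift S d \<mu> \<eta>) ` Z) \<subseteq> ?T"
      using lift_in_degrees[OF d] assms(2-4) that unfolding degrees_def by blast
    ultimately show ?thesis by blast
  qed
  have "hausdorff S d (\<delta> s a) (\<delta> t a)
      \<in> insert 0 ((\<lambda>\<mu>. lift_set S d \<mu> (\<delta> t a)) ` \<delta> s a \<union> (\<lambda>\<eta>. lift_set S d \<eta> (\<delta> s a)) ` \<delta> t a)"
    using family unfolding fuzzy_family_def by (intro hausdorff_in) auto
  moreover have "insert 0 ((\<lambda>\<mu>. lift_set S d \<mu> (\<delta> t a)) ` \<delta> s a \<union> (\<lambda>\<eta>. lift_set S d \<eta> (\<delta> s a)) ` \<delta> t a)
      \<subseteq> ?T"
    using lift_set_in_T unfolding degrees_def by blast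
  ultimately show ?thesis by blast
qed

lemma transition_dist_in:
  assumes "pseudo_ultrametric S d" and "s \<in> S" "t \<in> S"
  shows "transition_dist S A \<delta> d s t \<in> degrees S A \<delta> \<union> (\<lambda>(u, v). d u v) ` (S \<times> S)"
proof -
  have "insert 0 ((\<lambda>a. hausdorff S d (\<delta> s a) (\<delta> t a)) ` A) \<subseteq> degrees S A \<delta> \<union> (\<lambda>(u, v). d u v) ` (S \<times> S)"
    using hausdorff_in_degrees[OF assms] unfolding degrees_def by blast
  moreover have "transition_dist S A \<delta> d s t \<in> insert 0 ((\<lambda>a. hausdorff S d (\<delta> s a) (\<delta> t a)) ` A)"
    unfolding transition_dist_def using finite_actions by (intro Max_in) auto
  ultimately show ?thesis by (rule subsetD)
qed

lemma Delta_pseudo_ultrametric: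
  assumes d: "pseudo_ultrametric S d" and "0 \<le> \<gamma>" "\<gamma> \<le> 1"
  shows "pseudo_ultrametric S (Delta S A \<delta> \<gamma> d)"
proof -
  note T = transition_dist_pseudo_ultrametric[OF d]
  have "\<gamma> * transition_dist S A \<delta> d s r \<le> max (\<gamma> * transition_dist S A \<delta> d s t) (\<gamma> * transition_dist S A \<delta> d t r)"
    if "s \<in> S" "t \<in> S" "r \<in> S" for s t r
    using mult_left_mono[OF T(4)[OF that] \<open>0 \<le> \<gamma>\<close>] \<open>0 \<le> \<gamma>\<close> by (simp add: max_mult_distrib_left)
  moreover have "\<gamma> * transition_dist S A \<delta> d s t \<le> 1" if "s \<in> S" "t \<in> S" for s t
    using T(1)[OF that] transition_dist_nonneg assms(2,3) by (simp add: mult_le_one)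
  ultimately show ?thesis
    unfolding pseudo_ultrametric_def using T(2,3) transition_dist_nonneg \<open>0 \<le> \<gamma>\<close>
    by (simp add: Delta_eq_transition_dist) (simp add: Delta_def)
qed

lemma Delta_le_add:
  assumes "pseudo_ultrametric S d1" "pseudo_ultrametric S d2"
    and "\<forall>u\<in>S. \<forall>v\<in>S. d1 u v \<le> d2 u v + e" and "0 \<le> e" and "0 \<le> \<gamma>" and "s \<in> S" "t \<in> S"
  shows "Delta S A \<delta> \<gamma> d1 s t \<le> Delta S A \<delta> \<gamma> d2 s t + \<gamma> * e"
  using mult_left_mono[OF transition_dist_le_add[OF assms(1-4,6,7)] \<open>0 \<le> \<gamma>\<close>] assms(6,7)
  by (simp add: Delta_eq_transition_dist distrib_left)

lemma Delta_mono:
  assumes "pseudo_ultrametric S d1" "pseudo_ultrametric S d2"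
    and "\<forall>u\<in>S. \<forall>v\<in>S. d1 u v \<le> d2 u v" and "0 \<le> \<gamma>" and "s \<in> S" "t \<in> S"
  shows "Delta S A \<delta> \<gamma> d1 s t \<le> Delta S A \<delta> \<gamma> d2 s t"
  using Delta_le_add[OF assms(1,2) _ order_refl assms(4-6)] assms(3) by simp

lemma Delta_in_scaled_values:
  assumes "pseudo_ultrametric S d" and "s \<in> S" "t \<in> S"
  shows "Delta S A \<delta> \<gamma> d s t \<in> (\<lambda>c. \<gamma> * c) ` (degrees S A \<delta> \<union> (\<lambda>(u, v). d u v) ` (S \<times> S))"
  unfolding Delta_eq_transition_dist[OF assms(2,3)] by (rule imageI) (rule transition_dist_in[OF assms])

end

section \<open>The fixpoint\<close>

definition pointwise_Sup :: "nat set \<Rightarrow> (nat \<Rightarrow> nat \<Rightarrow> real) set \<Rightarrow> nat \<Rightarrow> nat \<Rightarrow> real" where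
  "pointwise_Sup S D = (\<lambda>x y. if x \<in> S \<and> y \<in> S then (SUP d\<in>D. d x y) else 0)"

lemma
  assumes "\<forall>d\<in>D. pseudo_ultrametric S d" and "x \<in> S" "y \<in> S"
  shows pointwise_Sup_upper: "d \<in> D \<Longrightarrow> d x y \<le> pointwise_Sup S D x y"
    and pointwise_Sup_least: "D \<noteq> {} \<Longrightarrow> (\<And>d. d \<in> D \<Longrightarrow> d x y \<le> b) \<Longrightarrow> pointwise_Sup S D x y \<le> b"
proof -
  have bdd: "bdd_above ((\<lambda>d. d x y) ` D)"
    using assms unfolding pseudo_ultrametric_def by (intro bdd_aboveI2[where M = 1]) auto
  then show "d \<in> D \<Longrightarrow> d x y \<le> pointwise_Sup S D x y"
    unfolding pointwise_Sup_def using assms(2,3) cSUP_upper[OF _ bdd] by simp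
  show "D \<noteq> {} \<Longrightarrow> (\<And>d. d \<in> D \<Longrightarrow> d x y \<le> b) \<Longrightarrow> pointwise_Sup S D x y \<le> b"
    unfolding pointwise_Sup_def using assms(2,3) by (simp add: cSUP_least)
qed

lemma pseudo_ultrametric_pointwise_Sup:
  assumes D: "\<forall>d\<in>D. pseudo_ultrametric S d" and "D \<noteq> {}"
  shows "pseudo_ultrametric S (pointwise_Sup S D)"
proof -
  note upper = pointwise_Sup_upper[OF D] and least = pointwise_Sup_least[OF D _ _ \<open>D \<noteq> {}\<close>]
  note dist = pseudo_ultrametricD[OF bspec[OF D]]
  obtain d0 where "d0 \<in> D" using \<open>D \<noteq> {}\<close> by blast
  show ?thesis
    unfolding pseudo_ultrametric_def
  proof (intro conjI ballI allI impI)
    fix x y assume xy: "x \<in> S" "y \<in> S"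
    show "0 \<le> pointwise_Sup S D x y"
      using upper[OF xy \<open>d0 \<in> D\<close>] dist(1)[OF \<open>d0 \<in> D\<close> xy] by linarith
    show "pointwise_Sup S D x y \<le> 1"
      using least[OF xy] dist(2)[OF _ xy] by blast
    have "pointwise_Sup S D x y \<le> pointwise_Sup S D y x" "pointwise_Sup S D y x \<le> pointwise_Sup S D x y"
      using least[OF xy] least[OF xy(2,1)] upper[OF xy] upper[OF xy(2,1)] dist(4)[OF _ xy] by metis+
    then show "pointwise_Sup S D x y = pointwise_Sup S D y x" by simp
  next
    fix x assume x: "x \<in> S"
    have "pointwise_Sup S D x x \<le> 0" by (rule least[OF x x]) (simp add: dist(3)[OF _ x])
    moreover have "0 \<le> pointwise_Sup S D x x"
      using upper[OF x x \<open>d0 \<in> D\<close>] dist(3)[OF \<open>d0 \<in> D\<close> x] by simp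
    ultimately show "pointwise_Sup S D x x = 0" by simp
  next
    fix x y z assume xyz: "x \<in> S" "y \<in> S" "z \<in> S"
    have "d x z \<le> max (pointwise_Sup S D x y) (pointwise_Sup S D y z)" if "d \<in> D" for d
      using dist(5)[OF that xyz] upper[OF xyz(1,2) that] upper[OF xyz(2,3) that]
      by (meson max.mono order_trans)
    then show "pointwise_Sup S D x z \<le> max (pointwise_Sup S D x y) (pointwise_Sup S D y z)"
      by (rule least[OF xyz(1,3)])
  next
    fix x y assume "x \<notin> S \<or> y \<notin> S"
    then show "pointwise_Sup S D x y = 0" unfolding pointwise_Sup_def by auto
  qed
qed

context fuzzy_ts
begin

text \<open>Knaster--Tarski: the pointwise supremum of all post-fixpoints of the monotone \<open>Delta\<close> is a
  fixpoint.\<close>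
lemma Delta_has_fixpoint:
  assumes "0 \<le> \<gamma>" "\<gamma> \<le> 1"
  obtains d where "pseudo_ultrametric S d" "Delta S A \<delta> \<gamma> d = d"
proof -
  define D where "D = {d. pseudo_ultrametric S d \<and> (\<forall>x\<in>S. \<forall>y\<in>S. d x y \<le> Delta S A \<delta> \<gamma> d x y)}"
  define dsup where "dsup = pointwise_Sup S D"
  have D: "\<forall>d\<in>D. pseudo_ultrametric S d" unfolding D_def by blast
  have zero: "pseudo_ultrametric S (\<lambda>x y. 0)" unfolding pseudo_ultrametric_def by simp
  then have "(\<lambda>x y. 0) \<in> D"
    unfolding D_def using pseudo_ultrametricD(1)[OF Delta_pseudo_ultrametric[OF zero assms]] by simp
  then have "D \<noteq> {}" by blast
  have dsup: "pseudo_ultrametric S dsup"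
    unfolding dsup_def by (rule pseudo_ultrametric_pointwise_Sup[OF D \<open>D \<noteq> {}\<close>])
  have upper: "d x y \<le> dsup x y" if "d \<in> D" "x \<in> S" "y \<in> S" for d x y
    unfolding dsup_def using pointwise_Sup_upper[OF D that(2,3) that(1)] .
  have post: "\<forall>x\<in>S. \<forall>y\<in>S. dsup x y \<le> Delta S A \<delta> \<gamma> dsup x y"
  proof (intro ballI)
    fix x y assume xy: "x \<in> S" "y \<in> S"
    have "d x y \<le> Delta S A \<delta> \<gamma> dsup x y" if "d \<in> D" for d
    proof -
      have "d x y \<le> Delta S A \<delta> \<gamma> d x y" using that xy unfolding D_def by blast
      also have "\<dots> \<le> Delta S A \<delta> \<gamma> dsup x y"
        using Delta_mono[OF bspec[OF D that] dsup _ assms(1) xy] upper[OF that] by blast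
      finally show ?thesis .
    qed
    then show "dsup x y \<le> Delta S A \<delta> \<gamma> dsup x y"
      using pointwise_Sup_least[OF D xy \<open>D \<noteq> {}\<close>] unfolding dsup_def[symmetric] by blast
  qed
  have Delta_dsup: "pseudo_ultrametric S (Delta S A \<delta> \<gamma> dsup)"
    using Delta_pseudo_ultrametric[OF dsup assms] .
  have "\<forall>x\<in>S. \<forall>y\<in>S. Delta S A \<delta> \<gamma> dsup x y \<le> Delta S A \<delta> \<gamma> (Delta S A \<delta> \<gamma> dsup) x y"
    using Delta_mono[OF dsup Delta_dsup post assms(1)] by blast
  then have "Delta S A \<delta> \<gamma> dsup \<in> D" using Delta_dsup unfolding D_def by blast
  then have below: "Delta S A \<delta> \<gamma> dsup x y \<le> dsup x y" if "x \<in> S" "y \<in> S" for x y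
    using upper that by blast
  have "Delta S A \<delta> \<gamma> dsup x y = dsup x y" for x y
  proof (cases "x \<in> S \<and> y \<in> S")
    case True
    then show ?thesis using post below by (meson order_antisym)
  next
    case False
    then show ?thesis using pseudo_ultrametricD(6)[OF Delta_dsup] pseudo_ultrametricD(6)[OF dsup] by simp
  qed
  then show ?thesis using that dsup by blast
qed

lemma Delta_fixpoint_unique:
  assumes "0 \<le> \<gamma>" "\<gamma> < 1"
    and d1: "pseudo_ultrametric S d1" "Delta S A \<delta> \<gamma> d1 = d1"
    and d2: "pseudo_ultrametric S d2" "Delta S A \<delta> \<gamma> d2 = d2"
  shows "d1 = d2"
proof -
  define e where "e = Max ((\<lambda>(u, v). \<bar>d1 u v - d2 u v\<bar>) ` (S \<times> S))"
  have fin: "finite ((\<lambda>(u, v). \<bar>d1 u v - d2 u v\<bar>) ` (S \<times> S))" using finite_states by auto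
  have e_ge: "\<bar>d1 u v - d2 u v\<bar> \<le> e" if "u \<in> S" "v \<in> S" for u v
    unfolding e_def using fin that by (intro Max_ge) auto
  have "e \<in> (\<lambda>(u, v). \<bar>d1 u v - d2 u v\<bar>) ` (S \<times> S)"
    unfolding e_def using fin states_nonempty by (intro Max_in) auto
  then obtain u0 v0 where uv0: "u0 \<in> S" "v0 \<in> S" "e = \<bar>d1 u0 v0 - d2 u0 v0\<bar>" by auto
  have "0 \<le> e" using uv0 by simp
  have "d1 u v \<le> d2 u v + e" "d2 u v \<le> d1 u v + e" if "u \<in> S" "v \<in> S" for u v
    using e_ge[OF that] unfolding abs_le_iff by linarith+
  then have "\<forall>u\<in>S. \<forall>v\<in>S. d1 u v \<le> d2 u v + e" "\<forall>u\<in>S. \<forall>v\<in>S. d2 u v \<le> d1 u v + e"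
    by blast+
  then have "d1 u v \<le> d2 u v + \<gamma> * e \<and> d2 u v \<le> d1 u v + \<gamma> * e" if "u \<in> S" "v \<in> S" for u v
    using Delta_le_add[OF d1(1) d2(1) _ \<open>0 \<le> e\<close> assms(1) that]
      Delta_le_add[OF d2(1) d1(1) _ \<open>0 \<le> e\<close> assms(1) that]
    unfolding d1(2) d2(2) by blast
  then have "\<bar>d1 u0 v0 - d2 u0 v0\<bar> \<le> \<gamma> * e" using uv0(1,2) by (simp only: abs_le_iff) force
  then have "e \<le> \<gamma> * e" using uv0(3) by simp
  then have "(1 - \<gamma>) * e \<le> 0" by (simp add: left_diff_distrib)
  with \<open>\<gamma> < 1\<close> \<open>0 \<le> e\<close> have "e = 0" by (simp add: mult_le_0_iff)
  then have eq: "d1 u v = d2 u v" if "u \<in> S" "v \<in> S" for u v using e_ge[OF that] by simp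
  show ?thesis
  proof (intro ext)
    fix x y show "d1 x y = d2 x y"
      using eq pseudo_ultrametricD(6)[OF d1(1)] pseudo_ultrametricD(6)[OF d2(1)]
      by (cases "x \<in> S \<and> y \<in> S") auto
  qed
qed

lemma fuzzy_dist_eqI:
  assumes "0 \<le> \<gamma>" "\<gamma> < 1" and d: "pseudo_ultrametric S d" "Delta S A \<delta> \<gamma> d = d"
  shows "fuzzy_dist S A \<delta> \<gamma> = d"
  unfolding fuzzy_dist_def
proof (rule the_equality)
  show "pseudo_ultrametric S d \<and> Delta S A \<delta> \<gamma> d = d \<and>
      (\<forall>d'. pseudo_ultrametric S d' \<and> Delta S A \<delta> \<gamma> d' = d' \<longrightarrow> (\<forall>x\<in>S. \<forall>y\<in>S. d x y \<le> d' x y))"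
  proof (intro conjI allI impI ballI)
    fix d' x y assume "pseudo_ultrametric S d' \<and> Delta S A \<delta> \<gamma> d' = d'"
    then have "d = d'" using Delta_fixpoint_unique[OF assms(1,2) d] by blast
    then show "d x y \<le> d' x y" by simp
  qed (use d in blast)+
next
  fix d' assume "pseudo_ultrametric S d' \<and> Delta S A \<delta> \<gamma> d' = d' \<and>
      (\<forall>d''. pseudo_ultrametric S d'' \<and> Delta S A \<delta> \<gamma> d'' = d'' \<longrightarrow> (\<forall>x\<in>S. \<forall>y\<in>S. d' x y \<le> d'' x y))"
  then show "d' = d" using Delta_fixpoint_unique[OF assms(1,2) _ _ d] by blast
qed

end

text \<open>If every value of \<open>f\<close> is \<open>\<gamma>\<close> times either a constant from \<open>C\<close> or another value of \<open>f\<close>,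
  then unfolding terminates after at most \<open>card P\<close> steps, since each unfolding step strictly increases
  a positive value.\<close>
lemma values_eq_power_times_const:
  fixes f :: "'p \<Rightarrow> real"
  assumes "finite P" and nonneg: "\<forall>p\<in>P. 0 \<le> f p" and "0 < \<gamma>" "\<gamma> < 1" and "0 \<in> C"
    and closed: "\<forall>p\<in>P. f p \<in> (\<lambda>c. \<gamma> * c) ` (C \<union> f ` P)" and "p \<in> P"
  shows "\<exists>j c. 1 \<le> j \<and> j \<le> card P \<and> c \<in> C \<and> f p = \<gamma> ^ j * c"
proof -
  have "\<exists>j c. 1 \<le> j \<and> j \<le> card {q\<in>P. f p \<le> f q} \<and> c \<in> C \<and> f p = \<gamma> ^ j * c"
    using \<open>p \<in> P\<close>
  proof (induction "card {q\<in>P. f p \<le> f q}" arbitrary: p rule: less_induct)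
    case less
    have "p \<in> {q\<in>P. f p \<le> f q}" using less.prems by simp
    then have "1 \<le> card {q\<in>P. f p \<le> f q}" using \<open>finite P\<close> by (auto simp: Suc_le_eq card_gt_0_iff)
    obtain c' where c': "c' \<in> C \<union> f ` P" "f p = \<gamma> * c'" using closed less.prems by blast
    consider "c' \<in> C" | "f p = 0" | q where "q \<in> P" "f p = \<gamma> * f q" "0 < f p"
      using c' nonneg less.prems by (metis UnE imageE order_le_less)
    then show ?case
    proof cases
      case 1
      then show ?thesis using c' \<open>1 \<le> card _\<close> by (intro exI[of _ 1] exI[of _ c']) simp
    next
      case 2
      then show ?thesis using \<open>0 \<in> C\<close> \<open>1 \<le> card _\<close> by (intro exI[of _ 1] exI[of _ 0]) simp
    next
      case 3
      then have "0 < f q" using \<open>0 < \<gamma>\<close> by (metis zero_less_mult_pos)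
      then have "f p < f q" using 3 \<open>\<gamma> < 1\<close> by simp
      then have "{r\<in>P. f q \<le> f r} \<subseteq> {r\<in>P. f p \<le> f r}" "p \<notin> {r\<in>P. f q \<le> f r}" by auto
      with \<open>p \<in> {q\<in>P. f p \<le> f q}\<close> have "{r\<in>P. f q \<le> f r} \<subset> {r\<in>P. f p \<le> f r}" by blast
      then have smaller: "card {r\<in>P. f q \<le> f r} < card {r\<in>P. f p \<le> f r}"
        using \<open>finite P\<close> by (simp add: psubset_card_mono)
      obtain j c where "1 \<le> j" "j \<le> card {r\<in>P. f q \<le> f r}" "c \<in> C" "f q = \<gamma> ^ j * c"
        using less.hyps[OF smaller \<open>q \<in> P\<close>] by blast
      then show ?thesis using 3 smaller by (intro exI[of _ "Suc j"] exI[of _ c]) auto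
    qed
  qed
  moreover have "card {q\<in>P. f p \<le> f q} \<le> card P" using \<open>finite P\<close> by (intro card_mono) auto
  ultimately show ?thesis by (meson order_trans)
qed

section \<open>Bit size of the fixpoint\<close>

lemma degree_bits:
  assumes fts: "fts S A \<delta>" and rat: "rational_fts S A \<delta>" and "c \<in> degrees S A \<delta>"
  obtains q where "c = of_rat q" "rat_bits q \<le> fts_size S A \<delta> + 3"
proof -
  have fin: "finite S" "finite A" "\<And>s a. s \<in> S \<Longrightarrow> a \<in> A \<Longrightarrow> finite (\<delta> s a)"
    and fuzzy: "\<And>s a \<mu>. s \<in> S \<Longrightarrow> a \<in> A \<Longrightarrow> \<mu> \<in> \<delta> s a \<Longrightarrow> fuzzy_set S \<mu>"
    using fts unfolding fts_def by auto
  consider "c = 0" | "c = 1" | s a \<mu> u where "s \<in> S" "a \<in> A" "\<mu> \<in> \<delta> s a" "u \<in> S" "c = \<mu> u"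
    using \<open>c \<in> degrees S A \<delta>\<close> unfolding degrees_def by blast
  then show ?thesis
  proof cases
    case 1
    then show ?thesis using that[of 0] by simp
  next
    case 2
    then show ?thesis using that[of 1] by simp
  next
    case (3 s a \<mu> u)
    then obtain q where q: "\<mu> u = of_rat q" using rat unfolding rational_fts_def by (meson Rats_cases)
    show ?thesis
    proof (cases "q = 0")
      case True
      then show ?thesis using that[of q] q 3 by simp
    next
      case False
      \<comment> \<open>only the support of \<open>\<mu>\<close> is counted in the size of the system\<close>
      moreover have "0 \<le> \<mu> u" using fuzzy[OF 3(1-3)] 3(4) unfolding fuzzy_set_def by blast
      ultimately have "u \<in> supp S \<mu>" using q 3(4) unfolding supp_def by simp
      have "rat_bits q = real_bits (\<mu> u)" using q by simp
      also have "\<dots> \<le> (\<Sum>x\<in>supp S \<mu>. real_bits (\<mu> x))"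
        using \<open>u \<in> supp S \<mu>\<close> fin(1) unfolding supp_def by (intro member_le_sum) auto
      also have "\<dots> \<le> (\<Sum>\<mu>'\<in>\<delta> s a. \<Sum>x\<in>supp S \<mu>'. real_bits (\<mu>' x))"
        using 3 fin by (intro member_le_sum) auto
      also have "\<dots> \<le> (\<Sum>a'\<in>A. \<Sum>\<mu>'\<in>\<delta> s a'. \<Sum>x\<in>supp S \<mu>'. real_bits (\<mu>' x))"
        using 3 fin by (intro member_le_sum) auto
      also have "\<dots> \<le> (\<Sum>s'\<in>S. \<Sum>a'\<in>A. \<Sum>\<mu>'\<in>\<delta> s' a'. \<Sum>x\<in>supp S \<mu>'. real_bits (\<mu>' x))"
        using 3 fin by (intro member_le_sum) auto
      also have "\<dots> \<le> fts_size S A \<delta>" unfolding fts_size_def by simp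
      finally show ?thesis using that[of q] q 3 by simp
    qed
  qed
qed

context fuzzy_ts
begin

lemma fuzzy_dist_eq_power_times_degree:
  assumes "0 < \<gamma>" "\<gamma> < 1" and "s \<in> S" "t \<in> S"
  obtains j c where "1 \<le> j" "j \<le> card S * card S" "c \<in> degrees S A \<delta>"
    "fuzzy_dist S A \<delta> \<gamma> s t = \<gamma> ^ j * c"
proof -
  obtain d where d: "pseudo_ultrametric S d" "Delta S A \<delta> \<gamma> d = d"
    using Delta_has_fixpoint[OF less_imp_le[OF assms(1)] less_imp_le[OF assms(2)]] .
  define f where "f = (\<lambda>(u, v). d u v)"
  have closed: "\<forall>p\<in>S \<times> S. f p \<in> (\<lambda>c. \<gamma> * c) ` (degrees S A \<delta> \<union> f ` (S \<times> S))"
  proof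
    fix p assume "p \<in> S \<times> S"
    then obtain u v where "p = (u, v)" "u \<in> S" "v \<in> S" by blast
    then show "f p \<in> (\<lambda>c. \<gamma> * c) ` (degrees S A \<delta> \<union> f ` (S \<times> S))"
      using Delta_in_scaled_values[OF d(1), of u v \<gamma>] unfolding d(2) f_def by simp
  qed
  have nonneg: "\<forall>p\<in>S \<times> S. 0 \<le> f p"
    unfolding f_def using pseudo_ultrametricD(1)[OF d(1)] by (simp add: mem_Times_iff case_prod_beta)
  have "0 \<in> degrees S A \<delta>" unfolding degrees_def by simp
  from values_eq_power_times_const[OF _ nonneg assms(1,2) this closed] finite_states assms(3,4)
  obtain j c where "1 \<le> j" "j \<le> card (S \<times> S)" "c \<in> degrees S A \<delta>" "d s t = \<gamma> ^ j * c"
    unfolding f_def by fastforce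
  moreover have "fuzzy_dist S A \<delta> \<gamma> = d" using fuzzy_dist_eqI[OF _ assms(2) d] assms(1) by simp
  ultimately show ?thesis using that by (simp add: card_cartesian_product)
qed

end

lemma fuzzy_dist_entry_bits:
  assumes fts: "fts S A \<delta>" and rat: "rational_fts S A \<delta>"
    and "\<gamma> \<in> \<rat>" "0 < \<gamma>" "\<gamma> < 1" and "s \<in> S" "t \<in> S"
  shows "fuzzy_dist S A \<delta> \<gamma> s t \<in> \<rat> \<and>
    real_bits (fuzzy_dist S A \<delta> \<gamma> s t) \<le> 8 * (fts_size S A \<delta> + real_bits \<gamma> + 1) ^ 3"
proof -
  interpret fuzzy_ts S A \<delta>
    using fts \<open>s \<in> S\<close> by unfold_locales (auto simp: fts_def fuzzy_family_def)
  define M where "M = fts_size S A \<delta> + real_bits \<gamma> + 1"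
  obtain j c where jc: "1 \<le> j" "j \<le> card S * card S" "c \<in> degrees S A \<delta>"
    "fuzzy_dist S A \<delta> \<gamma> s t = \<gamma> ^ j * c"
    using fuzzy_dist_eq_power_times_degree assms(4-7) by blast
  obtain q where q: "c = of_rat q" "rat_bits q \<le> fts_size S A \<delta> + 3"
    using degree_bits[OF fts rat jc(3)] .
  obtain r where r: "\<gamma> = of_rat r" using \<open>\<gamma> \<in> \<rat>\<close> by (rule Rats_cases)
  have dist_eq: "fuzzy_dist S A \<delta> \<gamma> s t = of_rat (r ^ j * q)"
    using jc(4) q(1) r by (simp add: of_rat_mult of_rat_power)
  have bits: "rat_bits (r ^ j * q) \<le> 6 + j * rat_bits r + fts_size S A \<delta>"
    using rat_bits_mult[of "r ^ j" q] rat_bits_power[of r j] q(2) by linarith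
  have M: "card S \<le> M" "fts_size S A \<delta> \<le> M" "rat_bits r \<le> M" "1 \<le> M"
    unfolding M_def fts_size_def r by simp_all
  have "j \<le> M * M" using jc(2) mult_le_mono[OF M(1) M(1)] by linarith
  then have "j * rat_bits r \<le> M * M * M" using M(3) by (rule mult_le_mono)
  moreover have "M \<le> M * M * M" "1 \<le> M * M * M"
    using le_cube[of M] M(4) by (simp_all add: mult.assoc)
  ultimately have "rat_bits (r ^ j * q) \<le> 8 * M ^ 3"
    using bits M(2) unfolding power3_eq_cube by linarith
  then show ?thesis using dist_eq unfolding M_def by simp
qed

theorem lemma7:
  "\<exists>c k :: nat. \<forall>(S :: nat set) (A :: nat set) \<delta> (\<gamma> :: real).
     fts S A \<delta> \<and> rational_fts S A \<delta> \<and> \<gamma> \<in> \<rat> \<and> 0 < \<gamma> \<and> \<gamma> < 1 \<longrightarrow>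
       (\<forall>s\<in>S. \<forall>t\<in>S. fuzzy_dist S A \<delta> \<gamma> s t \<in> \<rat>) \<and>
       (\<Sum>s\<in>S. \<Sum>t\<in>S. real_bits (fuzzy_dist S A \<delta> \<gamma> s t))
         \<le> c * (fts_size S A \<delta> + real_bits \<gamma> + 1) ^ k"
proof (rule exI[of _ 8], rule exI[of _ 5], intro allI impI)
  fix S A :: "nat set" and \<delta> :: "nat \<Rightarrow> nat \<Rightarrow> (nat \<Rightarrow> real) set" and \<gamma> :: real
  assume assms: "fts S A \<delta> \<and> rational_fts S A \<delta> \<and> \<gamma> \<in> \<rat> \<and> 0 < \<gamma> \<and> \<gamma> < 1"
  define M where "M = fts_size S A \<delta> + real_bits \<gamma> + 1"
  have entry: "fuzzy_dist S A \<delta> \<gamma> s t \<in> \<rat> \<and> real_bits (fuzzy_dist S A \<delta> \<gamma> s t) \<le> 8 * M ^ 3"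
    if "s \<in> S" "t \<in> S" for s t
    using fuzzy_dist_entry_bits[OF _ _ _ _ _ that] assms unfolding M_def by blast
  have "card S \<le> M" unfolding M_def fts_size_def by simp
  have "(\<Sum>s\<in>S. \<Sum>t\<in>S. real_bits (fuzzy_dist S A \<delta> \<gamma> s t)) \<le> (\<Sum>s\<in>S. \<Sum>t\<in>S. 8 * M ^ 3)"
    using entry by (intro sum_mono) auto
  also have "\<dots> = card S * card S * (8 * M ^ 3)" by simp
  also have "\<dots> \<le> M * M * (8 * M ^ 3)" using \<open>card S \<le> M\<close> by (intro mult_mono) auto
  also have "\<dots> = 8 * M ^ 5" by (simp add: power_numeral_reduce)
  finally show "(\<forall>s\<in>S. \<forall>t\<in>S. fuzzy_dist S A \<delta> \<gamma> s t \<in> \<rat>) \<and>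
      (\<Sum>s\<in>S. \<Sum>t\<in>S. real_bits (fuzzy_dist S A \<delta> \<gamma> s t)) \<le> 8 * (fts_size S A \<delta> + real_bits \<gamma> + 1) ^ 5"
    using entry unfolding M_def by blast
qed

end
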